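(* Let $d\ge1$. Then $\mathcal U(H(d,2))$ is isomorphic to the one-object groupoid $\{\ast\}/\!/(\mathbb Z/2\mathbb Z)$ (one object $\ast$, two morphisms $0=\mathrm{id}_\ast$ and $1$), and under this identification $\varpi(H(d,2))=(\bar\lambda,s_1)$ is given by $\bar\lambda(x)=\ast$ for objects $x$, $\bar\lambda((g,x))=\sum_{i=1}^d g_i\in\mathbb Z/2\mathbb Z$ for morphisms $(g,x)$, and $s_1(a)=a\bmod 2$ for $a\in\{0,1,\dots,d\}$. Consequently, for every category $\mathcal C$ every morphism-colored functor from $H(d,2)$ to $(\mathcal C,\mathrm{id})$ factors uniquely through this morphism-colored functor to $(\{\ast\}/\!/(\mathbb Z/2\mathbb Z),\mathrm{id})$, and for all positive integers $d,d'$ there is a one-to-one correspondence between morphism-colored functors $H(d,2)\to(\mathcal C,\mathrm{id})$ and morphism-colored functors $H(d',2)\to(\mathcal C,\mathrm{id})$.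
   Context: A morphism-colored category is a pair $(\mathcal C,\lambda)$ where $\mathcal C$ is a category and $\lambda$ assigns to each morphism $f$ a color $\lambda(f)$, such that whenever $\lambda(g)=\lambda(f_1\circ f_2)$ there exist composable $g_1,g_2$ with $g=g_1\circ g_2$, $\lambda(g_i)=\lambda(f_i)$. $(\mathcal C,\mathrm{id})$ (each morphism colored by itself) is the discrete morphism-colored category. A morphism-colored functor $(F,\gamma):(\mathcal C,\lambda)\to(\mathcal C',\lambda')$ is a functor $F$ with a map $\gamma$ on colors such that $\gamma(\lambda(f))=\lambda'(F(f))$ for all morphisms $f$; composition is componentwise. For a small morphism-colored groupoid $(\mathcal G,\lambda)$ with $\lambda(f)=\lambda(g)\Rightarrow\lambda(f^{-1})=\lambda(g^{-1})$: $I_1=\lambda(\mathrm{Mor}\,\mathcal G)$, $\lambda_1$ the corestriction; $I_0=\{\lambda(\mathrm{id}_x)\}$, $\lambda_0(x)=\lambda(\mathrm{id}_x)$; $\overset{1}{\sim}$ on $I_1$ relates $\lambda(f_1\circ\cdots\circ f_l)$ and $\lambda(g_1\circ\cdots\circ g_l)$ for composable sequences with $\lambda(f_i)=\lambda(g_i)$ for all $i$ (an equivalence relation), with quotient $s_1:I_1\to\bar I_1$; $\overset{0}{\sim}$ on $I_0$ relates $\lambda_0(\mathrm{source} f)$, $\lambda_0(\mathrm{source} g)$ whenever $s_1\lambda_1(f)=s_1\lambda_1(g)$, with quotient $s_0:I_0\to\bar I_0$. $\mathcal U(\mathcal G,\lambda)$ is the groupoid with objects $\bar I_0$, morphisms $\bar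 I_1$, source/target of $s_1\lambda_1(f)$ being $s_0\lambda_0$ of source/target of $f$, composition $s_1\lambda_1(f)\circ s_1\lambda_1(g)=s_1\lambda_1(f\circ g)$; $\bar\lambda:\mathcal G\to\mathcal U(\mathcal G,\lambda)$ is $x\mapsto s_0\lambda_0(x)$, $f\mapsto s_1\lambda_1(f)$, and $\varpi(\mathcal G,\lambda)=(\bar\lambda,s_1)$. Hamming schemoid: let $G=(\mathbb Z/n\mathbb Z)^d$ and $w(x)=\#\{i:x_i\neq0\}$ the Hamming weight. $G/\!/G$ is the action groupoid: objects $G$, morphisms $G\times G$, where $(g,x)$ has source $x$ and target $g+x$, composition $(h,g+x)\circ(g,x)=(h+g,x)$, identity $(0,x)$, inverse $(g,x)^{-1}=(-g,g+x)$. Let $\pi(g,x)=g$. Then $H(d,n)=(G/\!/G,\,w\circ\pi)$, with colors in $\{0,\dots,d\}$. *)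

theory Defs
  imports "HOL-Library.FuncSet"
begin

record ('o,'m) cat =
  Obj :: "'o set"
  Mor :: "'m set"
  Dom :: "'m \<Rightarrow> 'o"
  Cod :: "'m \<Rightarrow> 'o"
  Comp :: "'m \<Rightarrow> 'm \<Rightarrow> 'm"   (* Comp C g f = g \<circ> f, defined when Dom g = Cod f *)
  Ide :: "'o \<Rightarrow> 'm"

definition category :: "('o,'m) cat \<Rightarrow> bool" where
  "category C \<longleftrightarrow>
     (\<forall>f\<in>Mor C. Dom C f \<in> Obj C \<and> Cod C f \<in> Obj C) \<and>
     (\<forall>x\<in>Obj C. Ide C x \<in> Mor C \<and> Dom C (Ide C x) = x \<and> Cod C (Ide C x) = x) \<and>
     (\<forall>g\<in>Mor C. \<forall>f\<in>Mor C. Dom C g = Cod C f \<longrightarrow>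
         Comp C g f \<in> Mor C \<and> Dom C (Comp C g f) = Dom C f \<and> Cod C (Comp C g f) = Cod C g) \<and>
     (\<forall>f\<in>Mor C. Comp C (Ide C (Cod C f)) f = f \<and> Comp C f (Ide C (Dom C f)) = f) \<and>
     (\<forall>h\<in>Mor C. \<forall>g\<in>Mor C. \<forall>f\<in>Mor C. Dom C h = Cod C g \<longrightarrow> Dom C g = Cod C f \<longrightarrow>
         Comp C h (Comp C g f) = Comp C (Comp C h g) f)"

definition is_functor :: "('o,'m) cat \<Rightarrow> ('p,'n) cat \<Rightarrow> ('o \<Rightarrow> 'p) \<Rightarrow> ('m \<Rightarrow> 'n) \<Rightarrow> bool" where
  "is_functor C D Fo Fm \<longleftrightarrow>
     (\<forall>x\<in>Obj C. Fo x \<in> Obj D) \<and>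
     (\<forall>f\<in>Mor C. Fm f \<in> Mor D \<and> Dom D (Fm f) = Fo (Dom C f) \<and> Cod D (Fm f) = Fo (Cod C f)) \<and>
     (\<forall>g\<in>Mor C. \<forall>f\<in>Mor C. Dom C g = Cod C f \<longrightarrow> Fm (Comp C g f) = Comp D (Fm g) (Fm f)) \<and>
     (\<forall>x\<in>Obj C. Fm (Ide C x) = Ide D (Fo x))"

definition cat_iso :: "('o,'m) cat \<Rightarrow> ('p,'n) cat \<Rightarrow> ('o \<Rightarrow> 'p) \<Rightarrow> ('m \<Rightarrow> 'n) \<Rightarrow> bool" where
  "cat_iso C D Fo Fm \<longleftrightarrow> is_functor C D Fo Fm \<and> bij_betw Fo (Obj C) (Obj D) \<and> bij_betw Fm (Mor C) (Mor D)"

definition mc_cat :: "('o,'m) cat \<Rightarrow> ('m \<Rightarrow> 'c) \<Rightarrow> bool" where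
  "mc_cat C lam \<longleftrightarrow> category C \<and>
     (\<forall>f1\<in>Mor C. \<forall>f2\<in>Mor C. \<forall>g\<in>Mor C. Dom C f1 = Cod C f2 \<longrightarrow> lam g = lam (Comp C f1 f2) \<longrightarrow>
        (\<exists>g1\<in>Mor C. \<exists>g2\<in>Mor C. Dom C g1 = Cod C g2 \<and> g = Comp C g1 g2 \<and>
            lam g1 = lam f1 \<and> lam g2 = lam f2))"

text \<open>A morphism-colored functor (F, gamma); the components are represented as extensional
  functions on the respective carriers (objects, morphisms, colors = lam ` Mor C), so that
  equality of morphism-colored functors is equality of the triples.\<close>
definition mc_functor ::
  "('o,'m) cat \<Rightarrow> ('m \<Rightarrow> 'c) \<Rightarrow> ('p,'n) cat \<Rightarrow> ('n \<Rightarrow> 'e) \<Rightarrow>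
   ('o \<Rightarrow> 'p) \<Rightarrow> ('m \<Rightarrow> 'n) \<Rightarrow> ('c \<Rightarrow> 'e) \<Rightarrow> bool" where
  "mc_functor C lam D mu Fo Fm gam \<longleftrightarrow>
     is_functor C D Fo Fm \<and>
     Fo \<in> extensional (Obj C) \<and> Fm \<in> extensional (Mor C) \<and> gam \<in> extensional (lam ` Mor C) \<and>
     (\<forall>f\<in>Mor C. gam (lam f) = mu (Fm f))"

definition mc_functors ::
  "('o,'m) cat \<Rightarrow> ('m \<Rightarrow> 'c) \<Rightarrow> ('p,'n) cat \<Rightarrow> ('n \<Rightarrow> 'e) \<Rightarrow>
   (('o \<Rightarrow> 'p) \<times> ('m \<Rightarrow> 'n) \<times> ('c \<Rightarrow> 'e)) set" where
  "mc_functors C lam D mu = {(Fo, Fm, gam). mc_functor C lam D mu Fo Fm gam}"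

definition mc_comp ::
  "('o,'m) cat \<Rightarrow> ('m \<Rightarrow> 'c) \<Rightarrow>
   (('p \<Rightarrow> 'q) \<times> ('n \<Rightarrow> 'k) \<times> ('e \<Rightarrow> 'h)) \<Rightarrow>
   (('o \<Rightarrow> 'p) \<times> ('m \<Rightarrow> 'n) \<times> ('c \<Rightarrow> 'e)) \<Rightarrow>
   (('o \<Rightarrow> 'q) \<times> ('m \<Rightarrow> 'k) \<times> ('c \<Rightarrow> 'h))" where
  "mc_comp C lam G F =
     (compose (Obj C) (fst G) (fst F),
      compose (Mor C) (fst (snd G)) (fst (snd F)),
      compose (lam ` Mor C) (snd (snd G)) (snd (snd F)))"

definition chain :: "('o,'m) cat \<Rightarrow> 'm list \<Rightarrow> bool" where
  "chain G fs \<longleftrightarrow> fs \<noteq> [] \<and> set fs \<subseteq> Mor G \<and>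
     (\<forall>i. Suc i < length fs \<longrightarrow> Dom G (fs ! i) = Cod G (fs ! Suc i))"

fun comp_list :: "('o,'m) cat \<Rightarrow> 'm list \<Rightarrow> 'm" where
  "comp_list G [] = undefined"
| "comp_list G [f] = f"
| "comp_list G (f # fs) = Comp G f (comp_list G fs)"

definition I1 :: "('o,'m) cat \<Rightarrow> ('m \<Rightarrow> 'c) \<Rightarrow> 'c set" where
  "I1 G lam = lam ` Mor G"

definition rel1 :: "('o,'m) cat \<Rightarrow> ('m \<Rightarrow> 'c) \<Rightarrow> 'c \<Rightarrow> 'c \<Rightarrow> bool" where
  "rel1 G lam a b \<longleftrightarrow>
     (\<exists>fs gs. chain G fs \<and> chain G gs \<and> map lam fs = map lam gs \<and>
        a = lam (comp_list G fs) \<and> b = lam (comp_list G gs))"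

definition s1 :: "('o,'m) cat \<Rightarrow> ('m \<Rightarrow> 'c) \<Rightarrow> 'c \<Rightarrow> 'c set" where
  "s1 G lam a = {b \<in> I1 G lam. rel1 G lam a b}"

definition I0 :: "('o,'m) cat \<Rightarrow> ('m \<Rightarrow> 'c) \<Rightarrow> 'c set" where
  "I0 G lam = (\<lambda>x. lam (Ide G x)) ` Obj G"

definition lam0 :: "('o,'m) cat \<Rightarrow> ('m \<Rightarrow> 'c) \<Rightarrow> 'o \<Rightarrow> 'c" where
  "lam0 G lam x = lam (Ide G x)"

definition rel0_base :: "('o,'m) cat \<Rightarrow> ('m \<Rightarrow> 'c) \<Rightarrow> 'c \<Rightarrow> 'c \<Rightarrow> bool" where
  "rel0_base G lam a b \<longleftrightarrow>
     (\<exists>f\<in>Mor G. \<exists>g\<in>Mor G. s1 G lam (lam f) = s1 G lam (lam g) \<and>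
        a = lam0 G lam (Dom G f) \<and> b = lam0 G lam (Dom G g))"

definition s0 :: "('o,'m) cat \<Rightarrow> ('m \<Rightarrow> 'c) \<Rightarrow> 'c \<Rightarrow> 'c set" where
  "s0 G lam a = {b \<in> I0 G lam. (rel0_base G lam)\<^sup>*\<^sup>* a b}"

definition Ucat :: "('o,'m) cat \<Rightarrow> ('m \<Rightarrow> 'c) \<Rightarrow> ('c set, 'c set) cat" where
  "Ucat G lam =
    \<lparr> Obj = s0 G lam ` I0 G lam,
      Mor = s1 G lam ` I1 G lam,
      Dom = (\<lambda>A. s0 G lam (lam0 G lam (Dom G (SOME f. f \<in> Mor G \<and> s1 G lam (lam f) = A)))),
      Cod = (\<lambda>A. s0 G lam (lam0 G lam (Cod G (SOME f. f \<in> Mor G \<and> s1 G lam (lam f) = A)))),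
      Comp = (\<lambda>A B. s1 G lam (lam (case (SOME (f, g). f \<in> Mor G \<and> g \<in> Mor G \<and> Dom G f = Cod G g \<and>
                         s1 G lam (lam f) = A \<and> s1 G lam (lam g) = B) of (f, g) \<Rightarrow> Comp G f g))),
      Ide = (\<lambda>X. s1 G lam (lam (Ide G (SOME x. x \<in> Obj G \<and> s0 G lam (lam0 G lam x) = X)))) \<rparr>"

text \<open>varpi = (lambar, s1), lambar given by its object and morphism parts.\<close>
definition lambar_obj :: "('o,'m) cat \<Rightarrow> ('m \<Rightarrow> 'c) \<Rightarrow> 'o \<Rightarrow> 'c set" where
  "lambar_obj G lam x = s0 G lam (lam0 G lam x)"

definition lambar_mor :: "('o,'m) cat \<Rightarrow> ('m \<Rightarrow> 'c) \<Rightarrow> 'm \<Rightarrow> 'c set" where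
  "lambar_mor G lam f = s1 G lam (lam f)"

text \<open>Elements of (Z/nZ)^d: functions nat => nat with values < n at indices < d, zero elsewhere.\<close>
definition Hvec :: "nat \<Rightarrow> nat \<Rightarrow> (nat \<Rightarrow> nat) set" where
  "Hvec d n = {x. (\<forall>i<d. x i < n) \<and> (\<forall>i\<ge>d. x i = 0)}"

definition vadd :: "nat \<Rightarrow> (nat \<Rightarrow> nat) \<Rightarrow> (nat \<Rightarrow> nat) \<Rightarrow> (nat \<Rightarrow> nat)" where
  "vadd n x y = (\<lambda>i. (x i + y i) mod n)"

definition hweight :: "nat \<Rightarrow> (nat \<Rightarrow> nat) \<Rightarrow> nat" where
  "hweight d x = card {i. i < d \<and> x i \<noteq> 0}"

definition Hcat :: "nat \<Rightarrow> nat \<Rightarrow> (nat \<Rightarrow> nat, (nat \<Rightarrow> nat) \<times> (nat \<Rightarrow> nat)) cat" where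
  "Hcat d n =
    \<lparr> Obj = Hvec d n,
      Mor = Hvec d n \<times> Hvec d n,
      Dom = (\<lambda>(g, x). x),
      Cod = (\<lambda>(g, x). vadd n g x),
      Comp = (\<lambda>(h, y) (g, x). (vadd n h g, x)),
      Ide = (\<lambda>x. ((\<lambda>i. 0), x)) \<rparr>"

definition Hcol :: "nat \<Rightarrow> (nat \<Rightarrow> nat) \<times> (nat \<Rightarrow> nat) \<Rightarrow> nat" where
  "Hcol d f = hweight d (fst f)"

definition Z2grp :: "(unit, nat) cat" where
  "Z2grp = \<lparr> Obj = {()}, Mor = {0, 1}, Dom = (\<lambda>_. ()), Cod = (\<lambda>_. ()),
             Comp = (\<lambda>a b. (a + b) mod 2), Ide = (\<lambda>_. 0) \<rparr>"

end

theory Submission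
  imports Defs
begin

text \<open>
  Composition in \<open>H(d,2)\<close> adds vectors mod 2, so the weight of a composite has the parity
  of the sum of the weights; hence the sign \<open>(-1)^w\<close> is multiplicative and constant on the
  classes of \<open>\<sim>\<^sub>1\<close>. Conversely, two weights \<open>a \<le> b \<le> d\<close> of equal parity are the weights of
  composites of two composable pairs with the same pair of weights, so they are related. The
  colors therefore fall into exactly two classes, the even and the odd weights, and
  \<open>\<U>(H(d,2))\<close> is \<open>\<int>/2\<close>. The same pairs show that a morphism-colored functor into a discretely
  colored category takes equal values on weights of equal parity, so it factors uniquely through
  the parity functor. Precomposition with the parity functor is thus a bijection from the
  morphism-colored functors on \<open>\<int>/2\<close>, which do not depend on \<open>d\<close>.
\<close>

section \<open>Categories and morphism-colored functors\<close>

lemma is_functorD: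
  assumes "is_functor C D Fo Fm"
  shows "x \<in> Obj C \<Longrightarrow> Fo x \<in> Obj D"
    and "f \<in> Mor C \<Longrightarrow> Fm f \<in> Mor D"
    and "f \<in> Mor C \<Longrightarrow> Dom D (Fm f) = Fo (Dom C f)"
    and "f \<in> Mor C \<Longrightarrow> Cod D (Fm f) = Fo (Cod C f)"
    and "g \<in> Mor C \<Longrightarrow> f \<in> Mor C \<Longrightarrow> Dom C g = Cod C f \<Longrightarrow> Fm (Comp C g f) = Comp D (Fm g) (Fm f)"
    and "x \<in> Obj C \<Longrightarrow> Fm (Ide C x) = Ide D (Fo x)"
  using assms unfolding is_functor_def by blast+

lemma categoryD:
  assumes "category C"
  shows "f \<in> Mor C \<Longrightarrow> Dom C f \<in> Obj C"
    and "f \<in> Mor C \<Longrightarrow> Cod C f \<in> Obj C"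
    and "x \<in> Obj C \<Longrightarrow> Ide C x \<in> Mor C"
    and "x \<in> Obj C \<Longrightarrow> Dom C (Ide C x) = x"
    and "g \<in> Mor C \<Longrightarrow> f \<in> Mor C \<Longrightarrow> Dom C g = Cod C f \<Longrightarrow> Comp C g f \<in> Mor C"
    and "g \<in> Mor C \<Longrightarrow> f \<in> Mor C \<Longrightarrow> Dom C g = Cod C f \<Longrightarrow> Cod C (Comp C g f) = Cod C g"
  using assms unfolding category_def by blast+

lemma mc_functor_compose:
  assumes A: "category A"
    and F: "mc_functor A la B lb Fo Fm fg" and G: "mc_functor B lb C lc Go Gm gg"
  shows "mc_functor A la C lc (compose (Obj A) Go Fo) (compose (Mor A) Gm Fm) (compose (la ` Mor A) gg fg)"
proof -
  have Ff: "is_functor A B Fo Fm" and Fc: "\<forall>f\<in>Mor A. fg (la f) = lb (Fm f)"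
    using F by (auto simp: mc_functor_def)
  have Gf: "is_functor B C Go Gm" and Gc: "\<forall>f\<in>Mor B. gg (lb f) = lc (Gm f)"
    using G by (auto simp: mc_functor_def)
  have "is_functor A C (compose (Obj A) Go Fo) (compose (Mor A) Gm Fm)"
    using Ff Gf categoryD[OF A] unfolding is_functor_def compose_def by auto
  moreover have "\<forall>f\<in>Mor A. compose (la ` Mor A) gg fg (la f) = lc (compose (Mor A) Gm Fm f)"
    using Fc Gc is_functorD(2)[OF Ff] by (simp add: compose_def)
  ultimately show ?thesis unfolding mc_functor_def by simp
qed

lemma mc_comp_in_mc_functors:
  assumes "category A" "F \<in> mc_functors A la B lb" "G \<in> mc_functors B lb C lc"
  shows "mc_comp A la G F \<in> mc_functors A la C lc"
  using assms mc_functor_compose by (auto simp: mc_functors_def mc_comp_def)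

lemma compose_cancel_surj:
  assumes "compose A g f = compose A g' f" "f ` A = B" "g \<in> extensional B" "g' \<in> extensional B"
  shows "g = g'"
proof (rule extensionalityI[OF assms(3,4)])
  fix y assume "y \<in> B"
  then obtain x where "x \<in> A" "y = f x" using assms(2) by blast
  thus "g y = g' y" using fun_cong[OF assms(1), of x] by (simp add: compose_eq)
qed

lemma bij_betw_ex1_preimage:
  assumes "bij_betw f A B" "y \<in> B"
  shows "\<exists>!x. x \<in> A \<and> f x = y"
proof -
  obtain x where "x \<in> A" "f x = y" using assms by (auto simp: bij_betw_def)
  thus ?thesis using bij_betw_imp_inj_on[OF assms(1)] by (auto dest: inj_onD)
qed

lemma mc_comp_cancel_right:
  assumes surj: "Fo ` Obj A = Obj B" "Fm ` Mor A = Mor B" "fg ` la ` Mor A = lb ` Mor B"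
    and G: "G \<in> mc_functors B lb C lc" and G': "G' \<in> mc_functors B lb C lc"
    and eq: "mc_comp A la G (Fo, Fm, fg) = mc_comp A la G' (Fo, Fm, fg)"
  shows "G = G'"
proof -
  obtain Go Gm gg Go' Gm' gg' where G_def: "G = (Go, Gm, gg)" and G'_def: "G' = (Go', Gm', gg')"
    by (metis prod_cases3)
  have ext: "Go \<in> extensional (Obj B)" "Gm \<in> extensional (Mor B)" "gg \<in> extensional (lb ` Mor B)"
    "Go' \<in> extensional (Obj B)" "Gm' \<in> extensional (Mor B)" "gg' \<in> extensional (lb ` Mor B)"
    using G G' by (simp_all add: G_def G'_def mc_functors_def mc_functor_def)
  have "compose (Obj A) Go Fo = compose (Obj A) Go' Fo" "compose (Mor A) Gm Fm = compose (Mor A) Gm' Fm"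
    "compose (la ` Mor A) gg fg = compose (la ` Mor A) gg' fg"
    using eq by (simp_all add: G_def G'_def mc_comp_def)
  hence "Go = Go'" "Gm = Gm'" "gg = gg'"
    using compose_cancel_surj[OF _ surj(1) ext(1,4)] compose_cancel_surj[OF _ surj(2) ext(2,5)]
      compose_cancel_surj[OF _ surj(3) ext(3,6)] by simp_all
  thus ?thesis by (simp add: G_def G'_def)
qed

lemma mc_functor_discrete_mor:
  assumes "mc_functor A la C id Fo Fm gam" "f \<in> Mor A"
  shows "Fm f = gam (la f)"
  using assms by (simp add: mc_functor_def)

lemma mc_functor_discrete_comp:
  assumes A: "category A" and F: "mc_functor A la C id Fo Fm gam"
    and f: "f \<in> Mor A" and g: "g \<in> Mor A" and fg: "Dom A f = Cod A g"
  shows "gam (la (Comp A f g)) = Comp C (gam (la f)) (gam (la g))"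
proof -
  have "is_functor A C Fo Fm" using F by (simp add: mc_functor_def)
  hence "Fm (Comp A f g) = Comp C (Fm f) (Fm g)" using f g fg by (rule is_functorD(5))
  thus ?thesis using categoryD(5)[OF A f g fg] f g mc_functor_discrete_mor[OF F] by simp
qed

lemma mc_functor_discrete_obj:
  assumes A: "category A" and F: "mc_functor A la C id Fo Fm gam" and x: "x \<in> Obj A"
  shows "Fo x = Dom C (gam (la (Ide A x)))"
proof -
  have "is_functor A C Fo Fm" using F by (simp add: mc_functor_def)
  hence "Dom C (Fm (Ide A x)) = Fo x" using categoryD(3,4)[OF A x] is_functorD(3) by metis
  thus ?thesis using mc_functor_discrete_mor[OF F categoryD(3)[OF A x]] by simp
qed

lemma chain_single: "chain G [f] \<longleftrightarrow> f \<in> Mor G"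
  by (simp add: chain_def)

lemma chain_Cons_Cons:
  "chain G (f # g # gs) \<longleftrightarrow> f \<in> Mor G \<and> Dom G f = Cod G g \<and> chain G (g # gs)"
  by (auto simp: chain_def nth_Cons split: nat.splits)

lemma comp_list_chain:
  assumes G: "category G"
  shows "chain G fs \<Longrightarrow> comp_list G fs \<in> Mor G \<and> Cod G (comp_list G fs) = Cod G (hd fs)"
proof (induction fs)
  case (Cons f gs)
  show ?case
  proof (cases gs)
    case (Cons g hs)
    thus ?thesis using Cons.IH Cons.prems categoryD(5,6)[OF G] by (simp add: chain_Cons_Cons)
  qed (use Cons.prems in \<open>simp add: chain_single\<close>)
qed (simp add: chain_def)

lemma comp_list_chain_hom:
  fixes h :: "'m \<Rightarrow> 'a::monoid_mult"
  assumes G: "category G" and hom: "\<And>f g. f \<in> Mor G \<Longrightarrow> g \<in> Mor G \<Longrightarrow> Dom G f = Cod G g \<Longrightarrow>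
      h (Comp G f g) = h f * h g"
  shows "chain G fs \<Longrightarrow> h (comp_list G fs) = prod_list (map h fs)"
proof (induction fs)
  case (Cons f gs)
  show ?case
  proof (cases gs)
    case (Cons g hs)
    thus ?thesis using Cons.IH Cons.prems comp_list_chain[OF G, of gs] hom
      by (simp add: chain_Cons_Cons)
  qed simp
qed (simp add: chain_def)

lemma rel1_invariant:
  fixes h :: "'c \<Rightarrow> 'a::monoid_mult"
  assumes G: "category G" and hom: "\<And>f g. f \<in> Mor G \<Longrightarrow> g \<in> Mor G \<Longrightarrow> Dom G f = Cod G g \<Longrightarrow>
      h (lam (Comp G f g)) = h (lam f) * h (lam g)"
    and "rel1 G lam a b"
  shows "h a = h b"
proof -
  obtain fs gs where fs: "chain G fs" and gs: "chain G gs" and eq: "map lam fs = map lam gs"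
    and a: "a = lam (comp_list G fs)" and b: "b = lam (comp_list G gs)"
    using assms(3) unfolding rel1_def by blast
  have prod: "\<And>ks. chain G ks \<Longrightarrow> h (lam (comp_list G ks)) = prod_list (map h (map lam ks))"
    using comp_list_chain_hom[OF G, of "h \<circ> lam"] hom by simp
  show ?thesis using prod[OF fs] prod[OF gs] by (simp add: a b eq)
qed

lemma rel1_sym: "rel1 G lam a b \<Longrightarrow> rel1 G lam b a"
proof -
  assume "rel1 G lam a b"
  then obtain fs gs where "chain G fs" "chain G gs" "map lam fs = map lam gs"
    "a = lam (comp_list G fs)" "b = lam (comp_list G gs)"
    unfolding rel1_def by blast
  thus ?thesis unfolding rel1_def by (intro exI[of _ gs] exI[of _ fs]) simp
qed

lemma rel1_compI:
  assumes "f1 \<in> Mor G" "f2 \<in> Mor G" "g1 \<in> Mor G" "g2 \<in> Mor G"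
    "Dom G f1 = Cod G f2" "Dom G g1 = Cod G g2" "lam f1 = lam g1" "lam f2 = lam g2"
  shows "rel1 G lam (lam (Comp G f1 f2)) (lam (Comp G g1 g2))"
  unfolding rel1_def
  by (rule exI[of _ "[f1, f2]"], rule exI[of _ "[g1, g2]"]) (simp add: assms chain_Cons_Cons chain_single)

section \<open>The Hamming schemoid \<open>H(d,2)\<close>\<close>

lemma Hcat_simps [simp]:
  "Obj (Hcat d n) = Hvec d n" "Mor (Hcat d n) = Hvec d n \<times> Hvec d n"
  "Dom (Hcat d n) (g, x) = x" "Cod (Hcat d n) (g, x) = vadd n g x"
  "Comp (Hcat d n) (h, y) (g, x) = (vadd n h g, x)" "Ide (Hcat d n) x = ((\<lambda>i. 0), x)"
  by (simp_all add: Hcat_def)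

lemma Hcol_Pair [simp]: "Hcol d (g, x) = hweight d g"
  by (simp add: Hcol_def)

lemma zero_in_Hvec [simp]: "0 < n \<Longrightarrow> (\<lambda>i. 0) \<in> Hvec d n"
  by (simp add: Hvec_def)

lemma vadd_in_Hvec: "0 < n \<Longrightarrow> x \<in> Hvec d n \<Longrightarrow> y \<in> Hvec d n \<Longrightarrow> vadd n x y \<in> Hvec d n"
  by (simp add: Hvec_def vadd_def)

lemma vadd_assoc: "vadd n (vadd n x y) z = vadd n x (vadd n y z)"
  by (simp add: vadd_def mod_add_left_eq mod_add_right_eq add.assoc)

lemma vadd_zero_left: "x \<in> Hvec d n \<Longrightarrow> vadd n (\<lambda>i. 0) x = x"
proof
  fix i assume "x \<in> Hvec d n"
  thus "vadd n (\<lambda>i. 0) x i = x i" by (cases "i < d") (auto simp: vadd_def Hvec_def)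
qed

lemma vadd_zero_right: "x \<in> Hvec d n \<Longrightarrow> vadd n x (\<lambda>i. 0) = x"
proof
  fix i assume "x \<in> Hvec d n"
  thus "vadd n x (\<lambda>i. 0) i = x i" by (cases "i < d") (auto simp: vadd_def Hvec_def)
qed

lemma category_Hcat: "0 < n \<Longrightarrow> category (Hcat d n)"
  unfolding category_def by (auto simp: vadd_in_Hvec vadd_assoc vadd_zero_left vadd_zero_right)

lemma hweight_le: "hweight d x \<le> d"
proof -
  have "{i. i < d \<and> x i \<noteq> 0} \<subseteq> {..<d}" by auto
  thus ?thesis unfolding hweight_def by (metis card_lessThan card_mono finite_lessThan)
qed

lemma hweight_zero [simp]: "hweight d (\<lambda>i. 0) = 0"
  by (simp add: hweight_def)

lemma hweight_eq_sum: "x \<in> Hvec d 2 \<Longrightarrow> hweight d x = (\<Sum>i<d. x i)"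
proof -
  assume x: "x \<in> Hvec d 2"
  have "(\<Sum>i<d. x i) = (\<Sum>i<d. if x i \<noteq> 0 then 1 else 0)"
  proof (rule sum.cong)
    fix i assume "i \<in> {..<d}"
    thus "x i = (if x i \<noteq> 0 then 1 else 0)" using x by (auto simp: Hvec_def less_2_cases_iff)
  qed simp
  also have "\<dots> = card {i. i < d \<and> x i \<noteq> 0}"
    by (simp add: sum.If_cases lessThan_def Collect_conj_eq Int_commute)
  finally show ?thesis by (simp add: hweight_def)
qed

lemma sum_vadd_mod2: "(\<Sum>i<d. vadd 2 x y i) mod 2 = ((\<Sum>i<d. x i) + (\<Sum>i<d. y i)) mod 2"
  by (simp add: vadd_def mod_sum_eq sum.distrib)

lemma hweight_vadd_mod2:
  "x \<in> Hvec d 2 \<Longrightarrow> y \<in> Hvec d 2 \<Longrightarrow>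
    hweight d (vadd 2 x y) mod 2 = (hweight d x + hweight d y) mod 2"
  by (simp add: hweight_eq_sum vadd_in_Hvec sum_vadd_mod2)

definition interval_vec :: "nat \<Rightarrow> nat \<Rightarrow> nat \<Rightarrow> nat" where
  "interval_vec l r = (\<lambda>i. if l \<le> i \<and> i < r then 1 else 0)"

lemma interval_vec_in_Hvec: "r \<le> d \<Longrightarrow> interval_vec l r \<in> Hvec d 2"
  by (auto simp: interval_vec_def Hvec_def)

lemma hweight_interval_vec: "r \<le> d \<Longrightarrow> hweight d (interval_vec l r) = r - l"
proof -
  assume "r \<le> d"
  hence "{i. i < d \<and> interval_vec l r i \<noteq> 0} = {l..<r}" by (auto simp: interval_vec_def)
  thus ?thesis by (simp add: hweight_def)
qed

lemma vadd_interval_vec_diff: "q \<le> p \<Longrightarrow> vadd 2 (interval_vec 0 p) (interval_vec 0 q) = interval_vec q p"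
  by (auto simp: vadd_def interval_vec_def)

lemma vadd_interval_vec_adjacent:
  "vadd 2 (interval_vec l m) (interval_vec m r) = interval_vec l r" if "l \<le> m" "m \<le> r"
  using that by (auto simp: vadd_def interval_vec_def fun_eq_iff)

lemma vadd_interval_vec_zero: "vadd 2 (interval_vec l r) (\<lambda>i. 0) = interval_vec l r"
  by (auto simp: vadd_def interval_vec_def)

lemma Hcol_image: "Hcol d ` (Hvec d 2 \<times> Hvec d 2) = {0..d}"
proof
  show "Hcol d ` (Hvec d 2 \<times> Hvec d 2) \<subseteq> {0..d}" using hweight_le by (auto simp: Hcol_def)
  show "{0..d} \<subseteq> Hcol d ` (Hvec d 2 \<times> Hvec d 2)"
  proof
    fix a assume "a \<in> {0..d}"
    hence "(interval_vec 0 a, \<lambda>i. 0) \<in> Hvec d 2 \<times> Hvec d 2" "Hcol d (interval_vec 0 a, \<lambda>i. 0) = a"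
      by (simp_all add: interval_vec_in_Hvec hweight_interval_vec)
    thus "a \<in> Hcol d ` (Hvec d 2 \<times> Hvec d 2)" by (metis image_eqI)
  qed
qed

text \<open>Two weights of equal parity are the weights of composites of two composable pairs
  with matching weights: with \<open>q = (b - a) / 2\<close> and \<open>p = a + q\<close>, the disjoint sum of \<open>[0, p)\<close> and
  \<open>[p, p + q)\<close> has weight \<open>p + q = b\<close> while the overlapping sum of \<open>[0, p)\<close> and \<open>[0, q)\<close> has
  weight \<open>p - q = a\<close>.\<close>
lemma Hcat_same_parity_split:
  assumes "a \<le> b" "b \<le> d" "a mod 2 = b mod 2"
  obtains f1 f2 g1 g2 where "f1 \<in> Mor (Hcat d 2)" "f2 \<in> Mor (Hcat d 2)" "g1 \<in> Mor (Hcat d 2)" "g2 \<in> Mor (Hcat d 2)"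
    "Dom (Hcat d 2) f1 = Cod (Hcat d 2) f2" "Dom (Hcat d 2) g1 = Cod (Hcat d 2) g2"
    "Hcol d f1 = Hcol d g1" "Hcol d f2 = Hcol d g2"
    "Hcol d (Comp (Hcat d 2) f1 f2) = a" "Hcol d (Comp (Hcat d 2) g1 g2) = b"
proof -
  define q where "q = (b - a) div 2"
  define p where "p = a + q"
  have "even (b - a)" using assms(1,3) by (simp add: mod2_eq_if split: if_splits)
  hence "b - a = 2 * q" by (simp add: q_def)
  hence pq: "q \<le> p" "p - q = a" "p + q = b" using assms(1) by (simp_all add: p_def)
  hence le: "p \<le> d" "q \<le> d" "p + q \<le> d" using assms(2) by linarith+
  let ?z = "\<lambda>i::nat. 0::nat"
  show ?thesis
  proof
    show "(interval_vec 0 p, interval_vec 0 q) \<in> Mor (Hcat d 2)" "(interval_vec 0 q, ?z) \<in> Mor (Hcat d 2)"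
      "(interval_vec 0 p, interval_vec p (p + q)) \<in> Mor (Hcat d 2)" "(interval_vec p (p + q), ?z) \<in> Mor (Hcat d 2)"
      using le by (simp_all add: interval_vec_in_Hvec)
    show "Hcol d (Comp (Hcat d 2) (interval_vec 0 p, interval_vec 0 q) (interval_vec 0 q, ?z)) = a"
      using le pq by (simp add: vadd_interval_vec_diff hweight_interval_vec)
    show "Hcol d (Comp (Hcat d 2) (interval_vec 0 p, interval_vec p (p + q)) (interval_vec p (p + q), ?z)) = b"
      using le pq by (simp add: vadd_interval_vec_adjacent hweight_interval_vec)
  qed (use le in \<open>simp_all add: vadd_interval_vec_zero hweight_interval_vec\<close>)
qed

section \<open>The universal groupoid of \<open>H(d,2)\<close>\<close>

lemma Z2grp_simps [simp]:
  "Obj Z2grp = {()}" "Mor Z2grp = {0, 1}" "Dom Z2grp a = ()" "Cod Z2grp a = ()"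
  "Comp Z2grp a b = (a + b) mod 2" "Ide Z2grp u = 0"
  by (simp_all add: Z2grp_def)

lemma rel1_Hcat_iff:
  assumes "a \<le> d"
  shows "rel1 (Hcat d 2) (Hcol d) a b \<longleftrightarrow> b \<le> d \<and> a mod 2 = b mod 2"
proof
  assume rel: "rel1 (Hcat d 2) (Hcol d) a b"
  have cat: "category (Hcat d 2)" by (simp add: category_Hcat)
  have "(-1::int) ^ a = (-1) ^ b"
  proof (rule rel1_invariant[OF cat _ rel])
    fix f g assume "f \<in> Mor (Hcat d 2)" "g \<in> Mor (Hcat d 2)"
    hence "Hcol d (Comp (Hcat d 2) f g) mod 2 = (Hcol d f + Hcol d g) mod 2"
      by (auto simp: hweight_vadd_mod2)
    hence "even (Hcol d (Comp (Hcat d 2) f g)) = even (Hcol d f + Hcol d g)"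
      by (simp only: even_iff_mod_2_eq_zero)
    thus "(-1::int) ^ Hcol d (Comp (Hcat d 2) f g) = (-1) ^ Hcol d f * (-1) ^ Hcol d g"
      unfolding power_add[symmetric] minus_one_power_iff by simp
  qed
  moreover obtain gs where "b = Hcol d (comp_list (Hcat d 2) gs)"
    using rel unfolding rel1_def by blast
  ultimately show "b \<le> d \<and> a mod 2 = b mod 2"
    by (auto simp: Hcol_def hweight_le minus_one_power_iff mod2_eq_if split: if_splits)
next
  assume b: "b \<le> d \<and> a mod 2 = b mod 2"
  have ordered: "rel1 (Hcat d 2) (Hcol d) a' b'" if ab': "a' \<le> b'" "b' \<le> d" "a' mod 2 = b' mod 2" for a' b'
  proof -
    obtain f1 f2 g1 g2 where split: "f1 \<in> Mor (Hcat d 2)" "f2 \<in> Mor (Hcat d 2)" "g1 \<in> Mor (Hcat d 2)"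
      "g2 \<in> Mor (Hcat d 2)" "Dom (Hcat d 2) f1 = Cod (Hcat d 2) f2" "Dom (Hcat d 2) g1 = Cod (Hcat d 2) g2"
      "Hcol d f1 = Hcol d g1" "Hcol d f2 = Hcol d g2"
      "Hcol d (Comp (Hcat d 2) f1 f2) = a'" "Hcol d (Comp (Hcat d 2) g1 g2) = b'"
      using Hcat_same_parity_split[OF ab'] .
    show ?thesis using rel1_compI[OF split(1-8)] split(9,10) by simp
  qed
  thus "rel1 (Hcat d 2) (Hcol d) a b"
  proof (cases "a \<le> b")
    case False
    thus ?thesis using b assms ordered[of b a] by (simp add: rel1_sym)
  qed (use b in simp)
qed

definition parity_class :: "nat \<Rightarrow> nat \<Rightarrow> nat set" where
  "parity_class d a = {b. b \<le> d \<and> b mod 2 = a mod 2}"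

lemma s1_Hcat: "a \<le> d \<Longrightarrow> s1 (Hcat d 2) (Hcol d) a = parity_class d a"
  by (auto simp: s1_def parity_class_def I1_def Hcol_image rel1_Hcat_iff)

lemma parity_class_mod2: "parity_class d (a mod 2) = parity_class d a"
  by (simp add: parity_class_def)

lemma I0_Hcat: "I0 (Hcat d 2) (Hcol d) = {0}"
proof -
  have "(\<lambda>i. 0) \<in> Hvec d 2" by simp
  hence "Hvec d 2 \<noteq> {}" by (metis empty_iff)
  thus ?thesis by (simp add: I0_def image_constant_conv)
qed

lemma s0_Hcat: "s0 (Hcat d 2) (Hcol d) 0 = {0}"
  unfolding s0_def I0_Hcat by (blast intro: rtranclp.rtrancl_refl)

lemma Ucat_Hcat_Obj: "Obj (Ucat (Hcat d 2) (Hcol d)) = {{0}}"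
  by (simp add: Ucat_def I0_Hcat s0_Hcat)

lemma Ucat_Hcat_Mor: "1 \<le> d \<Longrightarrow> Mor (Ucat (Hcat d 2) (Hcol d)) = {parity_class d 0, parity_class d 1}"
proof -
  assume d: "1 \<le> d"
  have "parity_class d ` {0..d} = {parity_class d 0, parity_class d 1}"
  proof
    show "parity_class d ` {0..d} \<subseteq> {parity_class d 0, parity_class d 1}"
    proof
      fix A assume "A \<in> parity_class d ` {0..d}"
      then obtain a where "A = parity_class d (a mod 2)" by (auto simp: parity_class_mod2)
      moreover have "a mod 2 = 0 \<or> a mod 2 = 1" by auto
      ultimately show "A \<in> {parity_class d 0, parity_class d 1}" by auto
    qed
  qed (use d in auto)
  thus ?thesis by (simp add: Ucat_def I1_def Hcol_image s1_Hcat)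
qed

lemma Ucat_Hcat_Ide: "Ide (Ucat (Hcat d 2) (Hcol d)) X = parity_class d 0"
  by (simp add: Ucat_def s1_Hcat)

text \<open>The odd class contains \<open>1\<close> because \<open>d \<ge> 1\<close>, the even class never does.\<close>
definition class_parity :: "nat set \<Rightarrow> nat" where
  "class_parity A = (if 1 \<in> A then 1 else 0)"

lemma class_parity_parity_class: "1 \<le> d \<Longrightarrow> class_parity (parity_class d a) = a mod 2"
  by (auto simp: class_parity_def parity_class_def)

lemma parity_class_class_parity:
  assumes d: "1 \<le> d" and A: "A \<in> Mor (Ucat (Hcat d 2) (Hcol d))"
  shows "parity_class d (class_parity A) = A"
proof -
  have "A = parity_class d 0 \<or> A = parity_class d 1" using A by (simp add: Ucat_Hcat_Mor[OF d])
  thus ?thesis by (elim disjE) (simp_all add: class_parity_parity_class[OF d])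
qed

lemma class_parity_Ucat_Hcat_Comp:
  assumes d: "1 \<le> d"
    and A: "A \<in> Mor (Ucat (Hcat d 2) (Hcol d))" and B: "B \<in> Mor (Ucat (Hcat d 2) (Hcol d))"
  shows "class_parity (Comp (Ucat (Hcat d 2) (Hcol d)) A B) = (class_parity A + class_parity B) mod 2"
proof -
  let ?H = "Hcat d 2" and ?s = "s1 (Hcat d 2) (Hcol d)"
  define P where "P = (\<lambda>(f, g). f \<in> Mor ?H \<and> g \<in> Mor ?H \<and> Dom ?H f = Cod ?H g \<and>
                         ?s (Hcol d f) = A \<and> ?s (Hcol d g) = B)"
  let ?a = "class_parity A" and ?b = "class_parity B"
  have "?a \<le> 1" "?b \<le> 1" by (simp_all add: class_parity_def)
  hence "P ((interval_vec 0 ?a, interval_vec 0 ?b), (interval_vec 0 ?b, \<lambda>i. 0))"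
    using d parity_class_class_parity[OF d A] parity_class_class_parity[OF d B]
    by (simp add: P_def interval_vec_in_Hvec hweight_interval_vec vadd_interval_vec_zero s1_Hcat)
  \<comment> \<open>whichever representatives \<open>SOME\<close> picks, the composite has the sum of their parities\<close>
  then obtain k y h x where "P ((k, y), (h, x))" and some: "(SOME p. P p) = ((k, y), (h, x))"
    by (metis someI surj_pair)
  hence mem: "k \<in> Hvec d 2" "h \<in> Hvec d 2" and AB: "?s (hweight d k) = A" "?s (hweight d h) = B"
    unfolding P_def by auto
  have "Comp (Ucat ?H (Hcol d)) A B = ?s (hweight d (vadd 2 k h))"
    using some unfolding Ucat_def P_def by simp
  hence "class_parity (Comp (Ucat ?H (Hcol d)) A B) = hweight d (vadd 2 k h) mod 2"
    by (simp add: s1_Hcat hweight_le class_parity_parity_class[OF d])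
  also have "\<dots> = (hweight d k + hweight d h) mod 2" using hweight_vadd_mod2 mem by blast
  finally show ?thesis
    unfolding AB[symmetric] by (simp add: s1_Hcat hweight_le class_parity_parity_class[OF d] mod_add_eq)
qed

lemma class_parity_s1_Hcat: "1 \<le> d \<Longrightarrow> a \<le> d \<Longrightarrow> class_parity (s1 (Hcat d 2) (Hcol d) a) = a mod 2"
  by (simp add: s1_Hcat class_parity_parity_class)

lemma class_parity_lambar_mor_Hcat:
  assumes "1 \<le> d" "(g, x) \<in> Mor (Hcat d 2)"
  shows "class_parity (lambar_mor (Hcat d 2) (Hcol d) (g, x)) = (\<Sum>i<d. g i) mod 2"
proof -
  have "class_parity (lambar_mor (Hcat d 2) (Hcol d) (g, x)) = hweight d g mod 2"
    by (simp add: lambar_mor_def class_parity_s1_Hcat[OF assms(1) hweight_le])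
  thus ?thesis using assms(2) by (simp add: hweight_eq_sum)
qed

lemma cat_iso_Ucat_Hcat:
  assumes d: "1 \<le> d"
  shows "cat_iso (Ucat (Hcat d 2) (Hcol d)) Z2grp (\<lambda>_. ()) class_parity"
proof -
  let ?U = "Ucat (Hcat d 2) (Hcol d)"
  have parity: "class_parity (parity_class d 0) = 0" "class_parity (parity_class d 1) = 1"
    using class_parity_parity_class[OF d] by simp_all
  have "0 \<in> parity_class d 0" "0 \<notin> parity_class d 1"
    by (simp_all add: parity_class_def)
  hence "parity_class d 0 \<noteq> parity_class d 1" by blast
  hence "bij_betw class_parity (Mor ?U) (Mor Z2grp)"
    unfolding Ucat_Hcat_Mor[OF d] bij_betw_def using parity by simp
  moreover have "is_functor ?U Z2grp (\<lambda>_. ()) class_parity"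
    using class_parity_Ucat_Hcat_Comp[OF d] parity
    by (auto simp: is_functor_def Ucat_Hcat_Ide class_parity_def)
  ultimately show ?thesis
    by (simp add: cat_iso_def Ucat_Hcat_Obj bij_betw_def)
qed

section \<open>Factorization through \<open>\<int>/2\<close>\<close>

definition parity_functor ::
  "nat \<Rightarrow> ((nat \<Rightarrow> nat) \<Rightarrow> unit) \<times> ((nat \<Rightarrow> nat) \<times> (nat \<Rightarrow> nat) \<Rightarrow> nat) \<times> (nat \<Rightarrow> nat)" where
  "parity_functor d =
     (restrict (\<lambda>x. ()) (Obj (Hcat d 2)),
      restrict (\<lambda>(g, x). (\<Sum>i<d. g i) mod 2) (Mor (Hcat d 2)),
      restrict (\<lambda>a. a mod 2) {0..d})"

lemma parity_functor_mc_functors: "parity_functor d \<in> mc_functors (Hcat d 2) (Hcol d) Z2grp id"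
proof -
  let ?Pm = "restrict (\<lambda>(g, x). (\<Sum>i<d. g i) mod 2) (Mor (Hcat d 2))"
  have Pm: "?Pm (g, x) = hweight d g mod 2" if "(g, x) \<in> Mor (Hcat d 2)" for g x
    using that by (simp add: hweight_eq_sum)
  have "is_functor (Hcat d 2) Z2grp (restrict (\<lambda>x. ()) (Obj (Hcat d 2))) ?Pm"
    unfolding is_functor_def
  proof (intro conjI ballI impI)
    fix f g assume "f \<in> Mor (Hcat d 2)" "g \<in> Mor (Hcat d 2)"
    thus "?Pm (Comp (Hcat d 2) f g) = Comp Z2grp (?Pm f) (?Pm g)"
      by (auto simp: sum_vadd_mod2 vadd_in_Hvec mod_add_eq)
  qed (auto simp: Pm)
  moreover have "\<forall>f\<in>Mor (Hcat d 2). restrict (\<lambda>a. a mod 2) {0..d} (Hcol d f) = id (?Pm f)"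
    using Pm hweight_le by auto
  ultimately show ?thesis
    by (simp add: parity_functor_def mc_functors_def mc_functor_def Hcol_image hweight_le)
qed

lemma parity_functor_surj:
  assumes d: "1 \<le> d"
  shows "fst (parity_functor d) ` Obj (Hcat d 2) = Obj Z2grp"
    and "fst (snd (parity_functor d)) ` Mor (Hcat d 2) = Mor Z2grp"
    and "snd (snd (parity_functor d)) ` Hcol d ` Mor (Hcat d 2) = id ` Mor Z2grp"
proof -
  have "(\<lambda>i. 0) \<in> Hvec d 2" by simp
  hence "(\<lambda>x. ()) ` Hvec d 2 = {()}" by blast
  thus "fst (parity_functor d) ` Obj (Hcat d 2) = Obj Z2grp"
    by (simp add: parity_functor_def)
  have witness: "(interval_vec 0 a, \<lambda>i. 0) \<in> Mor (Hcat d 2) \<and>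
      fst (snd (parity_functor d)) (interval_vec 0 a, \<lambda>i. 0) = a" if "a \<le> 1" for a
    using that d by (simp add: parity_functor_def interval_vec_in_Hvec hweight_interval_vec
        hweight_eq_sum[symmetric])
  show "fst (snd (parity_functor d)) ` Mor (Hcat d 2) = Mor Z2grp"
  proof
    show "fst (snd (parity_functor d)) ` Mor (Hcat d 2) \<subseteq> Mor Z2grp"
      by (auto simp: parity_functor_def)
    have "0 \<in> fst (snd (parity_functor d)) ` Mor (Hcat d 2)" "1 \<in> fst (snd (parity_functor d)) ` Mor (Hcat d 2)"
      using witness[of 0] witness[of 1] by (metis image_eqI le0 order_refl)+
    thus "Mor Z2grp \<subseteq> fst (snd (parity_functor d)) ` Mor (Hcat d 2)" by simp
  qed
  have "(\<lambda>a. a mod 2) ` {0..d} = {0, 1}"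
  proof
    show "{0, 1} \<subseteq> (\<lambda>a. a mod 2) ` {0..d}"
      using d image_eqI[of 0 "\<lambda>a. a mod 2" 0 "{0..d}"] image_eqI[of 1 "\<lambda>a. a mod 2" 1 "{0..d}"] by simp
  qed auto
  thus "snd (snd (parity_functor d)) ` Hcol d ` Mor (Hcat d 2) = id ` Mor Z2grp"
    by (simp add: parity_functor_def Hcol_image)
qed

lemma mc_functor_Hcat_color_mod2:
  assumes F: "mc_functor (Hcat d 2) (Hcol d) C id Fo Fm gam" and a: "a \<le> d"
  shows "gam a = gam (a mod 2)"
proof -
  have cat: "category (Hcat d 2)" by (simp add: category_Hcat)
  have "gam a' = gam b'" if ab: "a' \<le> b'" "b' \<le> d" "a' mod 2 = b' mod 2" for a' b'
  proof -
    obtain f1 f2 g1 g2 where split: "f1 \<in> Mor (Hcat d 2)" "f2 \<in> Mor (Hcat d 2)" "g1 \<in> Mor (Hcat d 2)"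
      "g2 \<in> Mor (Hcat d 2)" "Dom (Hcat d 2) f1 = Cod (Hcat d 2) f2" "Dom (Hcat d 2) g1 = Cod (Hcat d 2) g2"
      "Hcol d f1 = Hcol d g1" "Hcol d f2 = Hcol d g2"
      "Hcol d (Comp (Hcat d 2) f1 f2) = a'" "Hcol d (Comp (Hcat d 2) g1 g2) = b'"
      using Hcat_same_parity_split[OF ab] .
    thus ?thesis
      using mc_functor_discrete_comp[OF cat F split(1,2,5)] mc_functor_discrete_comp[OF cat F split(3,4,6)]
      by simp
  qed
  thus ?thesis using a by (metis mod_less_eq_dividend mod_mod_trivial)
qed

text \<open>A morphism-colored functor from \<open>H(d,2)\<close> to a discretely colored category is determined by
  its colors on the weights \<open>0\<close> and \<open>1\<close>.\<close>
definition parity_descent :: "('o, 'm) cat \<Rightarrow> (nat \<Rightarrow> 'm) \<Rightarrow> (unit \<Rightarrow> 'o) \<times> (nat \<Rightarrow> 'm) \<times> (nat \<Rightarrow> 'm)" where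
  "parity_descent C gam = (restrict (\<lambda>_. Dom C (gam 0)) {()}, restrict gam {0, 1}, restrict gam {0, 1})"

lemma mc_functor_Hcat_obj:
  assumes "mc_functor (Hcat d 2) (Hcol d) C id Fo Fm gam" "x \<in> Obj (Hcat d 2)"
  shows "Fo x = Dom C (gam 0)"
  using mc_functor_discrete_obj[OF category_Hcat assms] by simp

lemma parity_descent_mc_functors:
  assumes d: "1 \<le> d" and F: "mc_functor (Hcat d 2) (Hcol d) C id Fo Fm gam"
  shows "parity_descent C gam \<in> mc_functors Z2grp id C id"
proof -
  have cat: "category (Hcat d 2)" by (simp add: category_Hcat)
  have Ff: "is_functor (Hcat d 2) C Fo Fm" using F by (simp add: mc_functor_def)
  let ?o = "Dom C (gam 0)" and ?z = "\<lambda>i::nat. 0::nat"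
  have z: "?z \<in> Obj (Hcat d 2)" by simp
  have obj: "?o \<in> Obj C" using is_functorD(1)[OF Ff z] mc_functor_Hcat_obj[OF F z] by simp
  have pair: "(interval_vec 0 a, interval_vec 0 b) \<in> Mor (Hcat d 2) \<and>
      Hcol d (interval_vec 0 a, interval_vec 0 b) = a" if "a \<le> 1" "b \<le> 1" for a b
    using that d by (simp add: interval_vec_in_Hvec hweight_interval_vec)
  have mor: "gam a \<in> Mor C \<and> Dom C (gam a) = ?o \<and> Cod C (gam a) = ?o" if "a \<le> 1" for a
  proof -
    have f: "(interval_vec 0 a, ?z) \<in> Mor (Hcat d 2)" "Hcol d (interval_vec 0 a, ?z) = a"
      using that d by (simp_all add: interval_vec_in_Hvec hweight_interval_vec)
    hence "Fm (interval_vec 0 a, ?z) = gam a" using mc_functor_discrete_mor[OF F] by simp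
    thus ?thesis
      using is_functorD(2-4)[OF Ff f(1)] mc_functor_Hcat_obj[OF F] f(1) categoryD(1,2)[OF cat f(1)]
      by simp
  qed
  have comp: "gam ((a + b) mod 2) = Comp C (gam a) (gam b)" if ab: "a \<le> 1" "b \<le> 1" for a b
  proof -
    let ?f = "(interval_vec 0 a, interval_vec 0 b)" and ?g = "(interval_vec 0 b, ?z)"
    let ?c = "Hcol d (Comp (Hcat d 2) ?f ?g)"
    have fg: "?f \<in> Mor (Hcat d 2)" "?g \<in> Mor (Hcat d 2)" "Dom (Hcat d 2) ?f = Cod (Hcat d 2) ?g"
      "Hcol d ?f = a" "Hcol d ?g = b"
      using pair[OF ab] pair[OF ab(2) le0] by (simp_all add: vadd_interval_vec_zero)
    have "?c mod 2 = (a + b) mod 2"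
      using fg by (simp add: hweight_vadd_mod2)
    hence "gam ((a + b) mod 2) = gam ?c"
      using mc_functor_Hcat_color_mod2[OF F, of ?c] by (simp add: Hcol_def hweight_le)
    also have "\<dots> = Comp C (gam a) (gam b)"
      using mc_functor_discrete_comp[OF cat F fg(1-3)] fg(4,5) by simp
    finally show ?thesis .
  qed
  have ide: "gam 0 = Ide C ?o"
    using is_functorD(6)[OF Ff z] mc_functor_discrete_mor[OF F categoryD(3)[OF cat z]]
      mc_functor_Hcat_obj[OF F z] by simp
  have "is_functor Z2grp C (restrict (\<lambda>_. ?o) {()}) (restrict gam {0, 1})"
    unfolding is_functor_def
  proof (intro conjI ballI impI)
    fix a b :: nat assume "a \<in> Mor Z2grp" "b \<in> Mor Z2grp"
    thus "restrict gam {0, 1} (Comp Z2grp a b) = Comp C (restrict gam {0, 1} a) (restrict gam {0, 1} b)"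
      using comp[of a b] by auto
  qed (use obj mor[of 0] mor[of 1] ide in auto)
  thus ?thesis by (simp add: parity_descent_def mc_functors_def mc_functor_def)
qed

lemma mc_comp_parity_descent:
  assumes d: "1 \<le> d" and F: "mc_functor (Hcat d 2) (Hcol d) C id Fo Fm gam"
  shows "mc_comp (Hcat d 2) (Hcol d) (parity_descent C gam) (parity_functor d) = (Fo, Fm, gam)"
proof -
  have ext: "Fo \<in> extensional (Obj (Hcat d 2))" "Fm \<in> extensional (Mor (Hcat d 2))"
    "gam \<in> extensional (Hcol d ` Mor (Hcat d 2))"
    using F by (simp_all add: mc_functor_def)
  have mod2: "a mod 2 \<in> {0, 1}" for a :: nat by auto
  have "compose (Obj (Hcat d 2)) (restrict (\<lambda>_. Dom C (gam 0)) {()}) (fst (parity_functor d)) = Fo"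
    by (rule extensionalityI[OF compose_extensional ext(1)])
      (simp add: compose_eq parity_functor_def mc_functor_Hcat_obj[OF F])
  moreover have "compose (Mor (Hcat d 2)) (restrict gam {0, 1}) (fst (snd (parity_functor d))) = Fm"
  proof (rule extensionalityI[OF compose_extensional ext(2)])
    fix f assume f: "f \<in> Mor (Hcat d 2)"
    obtain g x where gx: "f = (g, x)" by fastforce
    hence "fst (snd (parity_functor d)) f = Hcol d f mod 2"
      using f by (simp add: parity_functor_def hweight_eq_sum)
    moreover have "gam (Hcol d f) = gam (Hcol d f mod 2)"
      using mc_functor_Hcat_color_mod2[OF F] by (simp add: Hcol_def hweight_le)
    ultimately show "compose (Mor (Hcat d 2)) (restrict gam {0, 1}) (fst (snd (parity_functor d))) f = Fm f"
      using f mod2 mc_functor_discrete_mor[OF F f] by (simp add: compose_eq)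
  qed
  moreover have "compose (Hcol d ` Mor (Hcat d 2)) (restrict gam {0, 1}) (snd (snd (parity_functor d))) = gam"
  proof (rule extensionalityI[OF compose_extensional ext(3)])
    fix a assume "a \<in> Hcol d ` Mor (Hcat d 2)"
    hence "a \<le> d" by (simp add: Hcol_image)
    thus "compose (Hcol d ` Mor (Hcat d 2)) (restrict gam {0, 1}) (snd (snd (parity_functor d))) a = gam a"
      using mod2[of a] mc_functor_Hcat_color_mod2[OF F, of a]
      by (simp add: compose_eq parity_functor_def Hcol_image)
  qed
  ultimately show ?thesis by (simp add: mc_comp_def parity_descent_def)
qed

lemma bij_betw_mc_comp_parity_functor:
  assumes d: "1 \<le> d"
  shows "bij_betw (\<lambda>G. mc_comp (Hcat d 2) (Hcol d) G (parity_functor d))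
    (mc_functors Z2grp id C id) (mc_functors (Hcat d 2) (Hcol d) C id)"
  unfolding bij_betw_def
proof
  show "inj_on (\<lambda>G. mc_comp (Hcat d 2) (Hcol d) G (parity_functor d)) (mc_functors Z2grp id C id)"
  proof (rule inj_onI)
    fix G G' assume G: "G \<in> mc_functors Z2grp id C id" and G': "G' \<in> mc_functors Z2grp id C id"
      and eq: "mc_comp (Hcat d 2) (Hcol d) G (parity_functor d) = mc_comp (Hcat d 2) (Hcol d) G' (parity_functor d)"
    from eq have "mc_comp (Hcat d 2) (Hcol d) G
        (fst (parity_functor d), fst (snd (parity_functor d)), snd (snd (parity_functor d))) =
      mc_comp (Hcat d 2) (Hcol d) G'
        (fst (parity_functor d), fst (snd (parity_functor d)), snd (snd (parity_functor d)))"
      by (simp only: prod.collapse)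
    thus "G = G'" by (rule mc_comp_cancel_right[OF parity_functor_surj[OF d] G G'])
  qed
  show "(\<lambda>G. mc_comp (Hcat d 2) (Hcol d) G (parity_functor d)) ` mc_functors Z2grp id C id =
      mc_functors (Hcat d 2) (Hcol d) C id"
  proof (intro equalityI subsetI)
    fix F assume "F \<in> (\<lambda>G. mc_comp (Hcat d 2) (Hcol d) G (parity_functor d)) ` mc_functors Z2grp id C id"
    thus "F \<in> mc_functors (Hcat d 2) (Hcol d) C id"
      using mc_comp_in_mc_functors[OF category_Hcat parity_functor_mc_functors] by auto
  next
    fix F assume "F \<in> mc_functors (Hcat d 2) (Hcol d) C id"
    then obtain Fo Fm gam where F: "F = (Fo, Fm, gam)" "mc_functor (Hcat d 2) (Hcol d) C id Fo Fm gam"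
      by (auto simp: mc_functors_def)
    thus "F \<in> (\<lambda>G. mc_comp (Hcat d 2) (Hcol d) G (parity_functor d)) ` mc_functors Z2grp id C id"
      using parity_descent_mc_functors[OF d] mc_comp_parity_descent[OF d] by (metis image_eqI)
  qed
qed

theorem proposition4p3:
  fixes d :: nat
  assumes "d \<ge> 1"
  shows
    "(\<exists>(\<Phi>o :: nat set \<Rightarrow> unit) (\<Phi>m :: nat set \<Rightarrow> nat).
        cat_iso (Ucat (Hcat d 2) (Hcol d)) Z2grp \<Phi>o \<Phi>m \<and>
        (\<forall>x\<in>Obj (Hcat d 2). \<Phi>o (lambar_obj (Hcat d 2) (Hcol d) x) = ()) \<and>
        (\<forall>g x. (g, x) \<in> Mor (Hcat d 2) \<longrightarrow>
            \<Phi>m (lambar_mor (Hcat d 2) (Hcol d) (g, x)) = (\<Sum>i<d. g i) mod 2) \<and>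
        (\<forall>a\<in>{0..d}. \<Phi>m (s1 (Hcat d 2) (Hcol d) a) = a mod 2))
     \<and> mc_functor (Hcat d 2) (Hcol d) Z2grp id
         (restrict (\<lambda>x. ()) (Obj (Hcat d 2)))
         (restrict (\<lambda>(g, x). (\<Sum>i<d. g i) mod 2) (Mor (Hcat d 2)))
         (restrict (\<lambda>a. a mod 2) {0..d})
     \<and> (\<forall>C :: ('o, 'm) cat. category C \<longrightarrow>
          (\<forall>F \<in> mc_functors (Hcat d 2) (Hcol d) C id.
             (\<exists>!G. G \<in> mc_functors Z2grp id C id \<and>
                mc_comp (Hcat d 2) (Hcol d) G
                  (restrict (\<lambda>x. ()) (Obj (Hcat d 2)),
                   restrict (\<lambda>(g, x). (\<Sum>i<d. g i) mod 2) (Mor (Hcat d 2)),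
                   restrict (\<lambda>a. a mod 2) {0..d}) = F)))
     \<and> (\<forall>(C :: ('o, 'm) cat) d'. category C \<longrightarrow> d' \<ge> 1 \<longrightarrow>
          (\<exists>h. bij_betw h (mc_functors (Hcat d 2) (Hcol d) C id)
                         (mc_functors (Hcat d' 2) (Hcol d') C id)))"
  unfolding parity_functor_def[symmetric]
proof (intro conjI allI impI ballI exI[of _ "\<lambda>_. ()"] exI[of _ class_parity])
  fix C :: "('o, 'm) cat" and F assume "F \<in> mc_functors (Hcat d 2) (Hcol d) C id"
  thus "\<exists>!G. G \<in> mc_functors Z2grp id C id \<and> mc_comp (Hcat d 2) (Hcol d) G (parity_functor d) = F"
    by (rule bij_betw_ex1_preimage[OF bij_betw_mc_comp_parity_functor[OF assms]])
next
  fix C :: "('o, 'm) cat" and d' :: nat assume "1 \<le> d'"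
  thus "\<exists>h. bij_betw h (mc_functors (Hcat d 2) (Hcol d) C id) (mc_functors (Hcat d' 2) (Hcol d') C id)"
    using bij_betw_trans[OF bij_betw_inv_into[OF bij_betw_mc_comp_parity_functor[OF assms]]
        bij_betw_mc_comp_parity_functor] by blast
qed (use assms parity_functor_mc_functors[of d] in
      \<open>simp_all add: cat_iso_Ucat_Hcat class_parity_lambar_mor_Hcat class_parity_s1_Hcat
        mc_functors_def parity_functor_def\<close>)

end
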